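(* Let $\sum_n x_n$ be an absolutely convergent series in a Banach space $X$, and let $k,j\in\mathbb N$ be such that $x_k=x_{k+1}=\dots=x_{k+2j-2}$. Then $j x_k\in S(E(x_n))$.
   Context: The achievement set of an absolutely convergent series $\sum_n x_n$ is $E(x_n):=\{\sum_{n\in A}x_n:\ A\subset\mathbb N\}$. For a subset $A$ of the additive group $X$, the spectre is $S(A):=\{z\in X:\ \forall_{a\in A}\ (a+z\in A \text{ or } a-z\in A)\}$. *)

theory Defs
  imports "HOL-Analysis.Analysis"
begin

text \<open>For an absolutely convergent series every such subsum exists; we use \<open>infsum\<close>.\<close>
definition achievement_set :: "(nat \<Rightarrow> 'a::banach) \<Rightarrow> 'a set" where
  "achievement_set x = {infsum x A | A. A \<subseteq> (UNIV :: nat set)}"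

definition spectre :: "'a::ab_group_add set \<Rightarrow> 'a set" where
  "spectre A = {z. \<forall>a\<in>A. a + z \<in> A \<or> a - z \<in> A}"

end

theory Submission
  imports Defs
begin

text \<open>Let \<open>B\<close> be the block of \<open>2j - 1\<close> equal terms \<open>c\<close>. Splitting a subsum at \<open>B\<close> writes every
  element of the achievement set as \<open>r + m c\<close>, where \<open>r\<close> is a subsum over indices outside \<open>B\<close>
  and \<open>0 \<le> m \<le> 2j - 1\<close>, and every such expression occurs. Adding \<open>j c\<close> is possible when
  \<open>m < j\<close>, subtracting it when \<open>m \<ge> j\<close>.\<close>

lemma infsum_constant_on_finite:
  fixes x :: "'b \<Rightarrow> 'a::real_normed_vector"
  assumes "finite C" and "\<And>n. n \<in> C \<Longrightarrow> x n = c"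
  shows "infsum x C = of_nat (card C) *\<^sub>R c"
proof -
  have "infsum x C = sum x C"
    using assms(1) by simp
  also have "\<dots> = sum (\<lambda>_. c) C"
    using assms(2) by (rule sum.cong[OF refl])
  also have "\<dots> = of_nat (card C) *\<^sub>R c"
    by (rule sum_constant_scaleR)
  finally show ?thesis .
qed

lemma achievement_set_split_constant_block:
  fixes x :: "nat \<Rightarrow> 'a::banach"
  assumes summable: "x summable_on UNIV"
    and "finite B" and const: "\<And>n. n \<in> B \<Longrightarrow> x n = c"
  shows "achievement_set x =
    {r + of_nat m *\<^sub>R c | r m. r \<in> infsum x ` {R. R \<inter> B = {}} \<and> m \<le> card B}"
    (is "_ = ?S")
proof -
  have summable_on: "x summable_on S" for S
    using summable_on_subset_banach[OF summable] by blast
  have split: "infsum x (R \<union> D) = infsum x R + of_nat (card D) *\<^sub>R c"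
    if "R \<inter> B = {}" and "D \<subseteq> B" for R D
  proof -
    have "R \<inter> D = {}" using that by blast
    then have "infsum x (R \<union> D) = infsum x R + infsum x D"
      by (simp add: infsum_Un_disjoint summable_on)
    also have "infsum x D = of_nat (card D) *\<^sub>R c"
      using that \<open>finite B\<close> const by (intro infsum_constant_on_finite) (auto intro: finite_subset)
    finally show ?thesis .
  qed
  show ?thesis
  proof (intro equalityI subsetI)
    fix a assume "a \<in> achievement_set x"
    then obtain A where a: "a = infsum x A"
      unfolding achievement_set_def by blast
    have "a = infsum x ((A - B) \<union> (A \<inter> B))"
      using a by (simp add: Un_Diff_Int)
    also have "\<dots> = infsum x (A - B) + of_nat (card (A \<inter> B)) *\<^sub>R c"
      by (rule split) auto
    finally have "a = infsum x (A - B) + of_nat (card (A \<inter> B)) *\<^sub>R c" .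
    moreover have "card (A \<inter> B) \<le> card B"
      using \<open>finite B\<close> by (simp add: card_mono)
    ultimately show "a \<in> ?S" by blast
  next
    fix a assume "a \<in> ?S"
    then obtain R m where a: "a = infsum x R + of_nat m *\<^sub>R c"
      and R: "R \<inter> B = {}" and "m \<le> card B"
      by blast
    then obtain D where "D \<subseteq> B" and "card D = m"
      using obtain_subset_with_card_n by metis
    then have "a = infsum x (R \<union> D)"
      using split[OF R] a by simp
    then show "a \<in> achievement_set x"
      unfolding achievement_set_def by blast
  qed
qed

lemma scaleR_of_nat_in_spectre:
  fixes c :: "'a::real_vector"
  assumes "2 * j \<le> N + 1"
  shows "of_nat j *\<^sub>R c \<in> spectre {r + of_nat m *\<^sub>R c | r m. r \<in> T \<and> m \<le> N}"
    (is "_ \<in> spectre ?S")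
  unfolding spectre_def
proof (intro CollectI ballI)
  fix a assume "a \<in> ?S"
  then obtain r m where a: "a = r + of_nat m *\<^sub>R c" and "r \<in> T" "m \<le> N"
    by blast
  show "a + of_nat j *\<^sub>R c \<in> ?S \<or> a - of_nat j *\<^sub>R c \<in> ?S"
  proof (cases "m < j")
    case True
    then have "a + of_nat j *\<^sub>R c = r + of_nat (m + j) *\<^sub>R c \<and> m + j \<le> N"
      using a assms by (simp add: scaleR_add_left)
    then show ?thesis using \<open>r \<in> T\<close> by blast
  next
    case False
    then have "a - of_nat j *\<^sub>R c = r + of_nat (m - j) *\<^sub>R c \<and> m - j \<le> N"
      using a \<open>m \<le> N\<close> by (simp add: of_nat_diff scaleR_diff_left)
    then show ?thesis using \<open>r \<in> T\<close> by blast
  qed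
qed

theorem mainTheorem12:
  fixes x :: "nat \<Rightarrow> 'a::banach" and k j :: nat
  assumes "summable (\<lambda>n. norm (x n))"
    and "j \<ge> 1"
    and "\<And>i. i \<le> 2 * j - 2 \<Longrightarrow> x (k + i) = x k"
  shows "of_nat j *\<^sub>R x k \<in> spectre (achievement_set x)"
proof -
  define B where "B = {k..<k + (2 * j - 1)}"
  have const: "x n = x k" if "n \<in> B" for n
    using that assms(3)[of "n - k"] unfolding B_def by auto
  have "finite B" and card_B: "card B = 2 * j - 1"
    unfolding B_def by simp_all
  have "achievement_set x =
      {r + of_nat m *\<^sub>R x k | r m. r \<in> infsum x ` {R. R \<inter> B = {}} \<and> m \<le> 2 * j - 1}"
    using achievement_set_split_constant_block[OF norm_summable_imp_summable_on[OF assms(1)]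
        \<open>finite B\<close> const]
    by (simp only: card_B)
  also have "of_nat j *\<^sub>R x k \<in> spectre \<dots>"
    by (rule scaleR_of_nat_in_spectre) simp
  finally show ?thesis .
qed

end
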